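(* Let $G$ be a graph, let $g:V(G)\to\mathbb N$, and let $v\in V(G)$. Suppose that $(G,g)$ has a removal scheme $\mathcal S=(<,\mathrm{sv})$ in which (i) $v\in\mathrm{sv}(u)$ for every $u\in N(v)$ deleted before $v$, and (ii) $x\notin\mathrm{sv}(v)$ for every $x\in N(v)$ deleted after $v$. Let $H=G-v$ and define $h:V(H)\to\mathbb N$ by $h(u)=g(u)-1$ if $u\in N(v)$ and $h(u)=g(u)$ otherwise. Then $H$ is $h$-removable.
   Context: All graphs are finite and simple. For a graph $G$, a function $f:V(G)\to\mathbb Z$, a vertex $u$ and a subset $W\subseteq N(u)$, the operation $\mathsf{DelSave}(G,f,u,W)$ outputs $G'=G-u$ and $f':V(G')\to\mathbb Z$ with $f'(x)=f(x)-1$ for $x\in N(u)\setminus W$ and $f'(x)=f(x)$ otherwise. This application is legal if $f(u)>\sum_{w\in W}f(w)$ and $f'(x)\ge1$ for all $x\in V(G')$. $G$ is $f$-removable (equivalently $(G,f)$ is removable) if all vertices of $G$ can be deleted by a sequence of legal $\mathsf{DelSave}$ applications, each time replacing $(G,f)$ by the output $(G',f')$; such a sequence is a removal scheme for $(G,f)$. A removal scheme is identified with the pair $(<,\mathrm{sv})$, where $<$ is the linear order in which vertices are deleted and $\mathrm{sv}(u)$ is the set $W$ used in the operation deleting $u$. The empty graph is trivially removable. *)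

theory Defs
  imports Main
begin

text \<open>A finite simple graph is given by a finite vertex set V and a symmetric,
irreflexive adjacency relation E (only its restriction to V matters).
Deleting a vertex u means replacing V by V - {u}.\<close>

definition simple_graph :: "'a set \<Rightarrow> ('a \<Rightarrow> 'a \<Rightarrow> bool) \<Rightarrow> bool" where
  "simple_graph V E \<longleftrightarrow> finite V \<and> (\<forall>x\<in>V. \<forall>y\<in>V. E x y \<longrightarrow> E y x) \<and> (\<forall>x\<in>V. \<not> E x x)"

definition nbhd :: "'a set \<Rightarrow> ('a \<Rightarrow> 'a \<Rightarrow> bool) \<Rightarrow> 'a \<Rightarrow> 'a set" where
  "nbhd V E u = {x \<in> V. E u x}"

definition delsave_fun ::
  "'a set \<Rightarrow> ('a \<Rightarrow> 'a \<Rightarrow> bool) \<Rightarrow> ('a \<Rightarrow> int) \<Rightarrow> 'a \<Rightarrow> 'a set \<Rightarrow> 'a \<Rightarrow> int" where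
  "delsave_fun V E f u W = (\<lambda>x. if x \<in> nbhd V E u - W then f x - 1 else f x)"

definition delsave_legal ::
  "'a set \<Rightarrow> ('a \<Rightarrow> 'a \<Rightarrow> bool) \<Rightarrow> ('a \<Rightarrow> int) \<Rightarrow> 'a \<Rightarrow> 'a set \<Rightarrow> bool" where
  "delsave_legal V E f u W \<longleftrightarrow> u \<in> V \<and> W \<subseteq> nbhd V E u \<and>
     f u > (\<Sum>w\<in>W. f w) \<and> (\<forall>x\<in>V - {u}. delsave_fun V E f u W x \<ge> 1)"

fun removal_scheme ::
  "'a set \<Rightarrow> ('a \<Rightarrow> 'a \<Rightarrow> bool) \<Rightarrow> ('a \<Rightarrow> int) \<Rightarrow> 'a list \<Rightarrow> ('a \<Rightarrow> 'a set) \<Rightarrow> bool" where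
  "removal_scheme V E f [] sv \<longleftrightarrow> V = {}"
| "removal_scheme V E f (u # us) sv \<longleftrightarrow>
     delsave_legal V E f u (sv u) \<and>
     removal_scheme (V - {u}) E (delsave_fun V E f u (sv u)) us sv"

definition removable :: "'a set \<Rightarrow> ('a \<Rightarrow> 'a \<Rightarrow> bool) \<Rightarrow> ('a \<Rightarrow> int) \<Rightarrow> bool" where
  "removable V E f \<longleftrightarrow> (\<exists>ord sv. removal_scheme V E f ord sv)"

end

theory Submission
  imports Defs
begin

text \<open>Delete the vertices of \<open>G - v\<close> in the original order, with \<open>v\<close> removed from
every saved set. A neighbour \<open>u\<close> of \<open>v\<close> deleted before \<open>v\<close> saved \<open>v\<close>, so it loses the
weight of \<open>v\<close> (at least 1) from its saved sum and can afford the loss of 1 in its own value.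
The extra decrement of a neighbour \<open>x\<close> of \<open>v\<close> keeps \<open>x\<close> positive because, in the original
scheme, \<open>x\<close> has value at least 2 until \<open>x\<close> or \<open>v\<close> is deleted: if \<open>x\<close> comes after \<open>v\<close>,
deleting \<open>v\<close> decrements \<open>x\<close> and leaves it positive; if \<open>x\<close> comes before \<open>v\<close>, its value
exceeds the saved value of \<open>v\<close>, which is positive. Legality alone forces saved values to be
positive, so neither the simplicity of the graph nor the nonnegativity of \<open>g\<close> is needed.\<close>

definition decrement :: "'a set \<Rightarrow> ('a \<Rightarrow> int) \<Rightarrow> 'a \<Rightarrow> int" where
  "decrement N f = (\<lambda>x. if x \<in> N then f x - 1 else f x)"

lemma removal_scheme_set: "removal_scheme V E f us sv \<Longrightarrow> V = set us"
proof (induction us arbitrary: V f)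
  case (Cons u us)
  then show ?case by (auto simp: delsave_legal_def)
qed simp

lemma removal_scheme_cong:
  assumes "removal_scheme V E f us sv"
    and "\<forall>x\<in>V. f' x = f x"
    and "\<forall>u. sv' u \<subseteq> sv u" and "\<forall>u. sv u \<inter> V \<subseteq> sv' u"
  shows "removal_scheme V E f' us sv'"
  using assms
proof (induction us arbitrary: V f f')
  case (Cons u us)
  have legal: "delsave_legal V E f u (sv u)"
    and rest: "removal_scheme (V - {u}) E (delsave_fun V E f u (sv u)) us sv"
    using Cons.prems(1) by auto
  have "sv u \<subseteq> V" using legal by (auto simp: delsave_legal_def nbhd_def)
  then have saved: "sv' u = sv u" using Cons.prems(3,4) by blast
  have "sum f' (sv u) = sum f (sv u)"
    using \<open>sv u \<subseteq> V\<close> Cons.prems(2) by (intro sum.cong) auto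
  moreover have agree: "\<forall>x\<in>V. delsave_fun V E f' u (sv u) x = delsave_fun V E f u (sv u) x"
    using Cons.prems(2) by (simp add: delsave_fun_def)
  ultimately have "delsave_legal V E f' u (sv' u)"
    using legal saved Cons.prems(2) by (auto simp: delsave_legal_def)
  moreover have "removal_scheme (V - {u}) E (delsave_fun V E f' u (sv u)) us sv'"
    by (rule Cons.IH[OF rest]) (use agree Cons.prems(3,4) in auto)
  ultimately show ?case using saved by simp
qed simp

lemma delsave_legal_saved_ge_1:
  assumes legal: "delsave_legal V E f u W" and "finite V" and "w \<in> W"
  shows "f w \<ge> 1"
proof -
  have W: "W \<subseteq> V" using legal by (auto simp: delsave_legal_def nbhd_def)
  have pos: "f y \<ge> 1" if "y \<in> W - {u}" for y
  proof -
    have "delsave_fun V E f u W y \<ge> 1" using legal that W by (auto simp: delsave_legal_def)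
    then show ?thesis using that by (simp add: delsave_fun_def)
  qed
  txt \<open>\<open>E\<close> may have loops, so \<open>u \<in> W\<close> has to be excluded by the sum condition.\<close>
  have "u \<notin> W"
  proof
    assume "u \<in> W"
    then have "sum f W = f u + sum f (W - {u})"
      using W \<open>finite V\<close> by (simp add: sum.remove finite_subset)
    moreover have "sum f (W - {u}) \<ge> 0" using pos by (intro sum_nonneg) fastforce
    ultimately show False using legal by (simp add: delsave_legal_def)
  qed
  then show ?thesis using pos \<open>w \<in> W\<close> by blast
qed

lemma delsave_fun_decrement_commute:
  "x \<noteq> v \<Longrightarrow> delsave_fun (V - {v}) E (decrement N f) u (W - {v}) x
     = decrement N (delsave_fun V E f u W) x"
  by (auto simp: delsave_fun_def decrement_def nbhd_def)

lemma removal_scheme_neighbour_ge_2: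
  assumes "removal_scheme V E f (xs @ v # ys) sv"
    and "x \<in> nbhd V E v" and "x \<noteq> v"
    and "x \<in> set xs \<longrightarrow> v \<in> sv x" and "x \<in> set ys \<longrightarrow> x \<notin> sv v"
  shows "f x \<ge> 2"
  using assms
proof (induction xs arbitrary: V f)
  case Nil
  have legal: "delsave_legal V E f v (sv v)" using Nil.prems(1) by simp
  have "x \<in> set ys" using removal_scheme_set[OF Nil.prems(1)] Nil.prems(2,3)
    by (auto simp: nbhd_def)
  then have "delsave_fun V E f v (sv v) x = f x - 1"
    using Nil.prems(2,5) by (simp add: delsave_fun_def)
  moreover have "delsave_fun V E f v (sv v) x \<ge> 1"
    using legal Nil.prems(2,3) by (auto simp: delsave_legal_def nbhd_def)
  ultimately show ?case by simp
next
  case (Cons u xs)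
  have legal: "delsave_legal V E f u (sv u)"
    and rest: "removal_scheme (V - {u}) E (delsave_fun V E f u (sv u)) (xs @ v # ys) sv"
    using Cons.prems(1) by auto
  have "finite V" using removal_scheme_set[OF Cons.prems(1)] by simp
  show ?case
  proof (cases "u = x")
    case True
    then have "v \<in> sv x" using Cons.prems(4) by simp
    have saved_pos: "f w \<ge> 1" if "w \<in> sv x" for w
      using delsave_legal_saved_ge_1[OF legal \<open>finite V\<close>] that True by simp
    have "finite (sv x)"
      using legal True \<open>finite V\<close> by (auto simp: delsave_legal_def nbhd_def intro: finite_subset)
    then have "f v \<le> sum f (sv x)"
      using \<open>v \<in> sv x\<close> saved_pos by (intro member_le_sum) fastforce+
    moreover have "f v \<ge> 1" using saved_pos \<open>v \<in> sv x\<close> .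
    moreover have "f x > sum f (sv x)" using legal True by (simp add: delsave_legal_def)
    ultimately show ?thesis by simp
  next
    case False
    then have "delsave_fun V E f u (sv u) x \<ge> 2"
      using Cons.IH[OF rest] Cons.prems(2-5) by (auto simp: nbhd_def)
    then show ?thesis by (simp add: delsave_fun_def split: if_splits)
  qed
qed

lemma delsave_legal_decrement:
  assumes legal: "delsave_legal V E f u W" and "finite V" and "u \<noteq> v"
    and "u \<in> N \<longrightarrow> v \<in> W"
    and slack: "\<forall>x\<in>N \<inter> (V - {u, v}). delsave_fun V E f u W x \<ge> 2"
  shows "delsave_legal (V - {v}) E (decrement N f) u (W - {v})"
proof -
  have "finite W" using legal \<open>finite V\<close>
    by (auto simp: delsave_legal_def nbhd_def intro: finite_subset)
  have sum_le: "sum (decrement N f) (W - {v}) \<le> sum f (W - {v})"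
    by (intro sum_mono) (simp add: decrement_def)
  have "f u > sum f W" using legal by (simp add: delsave_legal_def)
  have "decrement N f u > sum (decrement N f) (W - {v})"
  proof (cases "v \<in> W")
    case True
    then have "sum f W = f v + sum f (W - {v})"
      using \<open>finite W\<close> by (simp add: sum.remove)
    moreover have "f v \<ge> 1" using delsave_legal_saved_ge_1[OF legal \<open>finite V\<close> True] .
    ultimately show ?thesis
      using \<open>f u > sum f W\<close> sum_le by (simp add: decrement_def)
  next
    case False
    then show ?thesis
      using \<open>f u > sum f W\<close> sum_le \<open>u \<in> N \<longrightarrow> v \<in> W\<close> by (simp add: decrement_def)
  qed
  moreover have "delsave_fun (V - {v}) E (decrement N f) u (W - {v}) x \<ge> 1"
    if "x \<in> V - {v} - {u}" for x
  proof -
    have "delsave_fun V E f u W x \<ge> 1" using legal that by (simp add: delsave_legal_def)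
    moreover have "delsave_fun V E f u W x \<ge> 2" if "x \<in> N"
      using slack \<open>x \<in> V - {v} - {u}\<close> that by blast
    ultimately have "decrement N (delsave_fun V E f u W) x \<ge> 1"
      by (auto simp: decrement_def)
    then show ?thesis using that delsave_fun_decrement_commute by fastforce
  qed
  ultimately show ?thesis
    using legal \<open>u \<noteq> v\<close> by (auto simp: delsave_legal_def nbhd_def)
qed

lemma removal_scheme_skip_vertex:
  assumes "removal_scheme V E f (xs @ v # ys) sv"
    and "\<forall>u\<in>set xs. u \<in> N \<longrightarrow> v \<in> sv u"
    and "\<forall>x\<in>set ys. x \<in> N \<longrightarrow> x \<notin> sv v"
    and "N \<inter> V = nbhd V E v"
  shows "removal_scheme (V - {v}) E (decrement N f) (xs @ ys) (\<lambda>u. sv u - {v})"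
  using assms
proof (induction xs arbitrary: V f)
  case Nil
  have rest: "removal_scheme (V - {v}) E (delsave_fun V E f v (sv v)) ys sv"
    using Nil.prems(1) by simp
  have "V - {v} = set ys"
    using removal_scheme_set[OF Nil.prems(1)] rest removal_scheme_set by fastforce
  then have "\<forall>x\<in>V - {v}. decrement N f x = delsave_fun V E f v (sv v) x"
    using Nil.prems(3,4) by (auto simp: decrement_def delsave_fun_def)
  then have "removal_scheme (V - {v}) E (decrement N f) ys (\<lambda>u. sv u - {v})"
    by (rule removal_scheme_cong[OF rest]) auto
  then show ?case by simp
next
  case (Cons u xs)
  let ?f\<^sub>1 = "delsave_fun V E f u (sv u)"
  have legal: "delsave_legal V E f u (sv u)"
    and rest: "removal_scheme (V - {u}) E ?f\<^sub>1 (xs @ v # ys) sv"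
    using Cons.prems(1) by auto
  have "finite V" using removal_scheme_set[OF Cons.prems(1)] by simp
  have "u \<noteq> v" using removal_scheme_set[OF rest] by auto
  have "V - {u} - {v} = V - {v} - {u}" by blast
  then have "removal_scheme (V - {v} - {u}) E (decrement N ?f\<^sub>1) (xs @ ys) (\<lambda>u. sv u - {v})"
    using Cons.IH[OF rest] Cons.prems(2-4) by (auto simp: nbhd_def)
  then have "removal_scheme (V - {v} - {u}) E
      (delsave_fun (V - {v}) E (decrement N f) u (sv u - {v})) (xs @ ys) (\<lambda>u. sv u - {v})"
    by (rule removal_scheme_cong) (auto simp: delsave_fun_decrement_commute)
  moreover have "delsave_legal (V - {v}) E (decrement N f) u (sv u - {v})"
  proof (rule delsave_legal_decrement[OF legal \<open>finite V\<close> \<open>u \<noteq> v\<close>])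
    show "u \<in> N \<longrightarrow> v \<in> sv u" using Cons.prems(2) by simp
    show "\<forall>x\<in>N \<inter> (V - {u, v}). ?f\<^sub>1 x \<ge> 2"
      using removal_scheme_neighbour_ge_2[OF rest] Cons.prems(2-4) by (auto simp: nbhd_def)
  qed
  ultimately show ?case by simp
qed

theorem lemma3p2:
  fixes V :: "'a set" and E :: "'a \<Rightarrow> 'a \<Rightarrow> bool" and g :: "'a \<Rightarrow> int"
    and v :: 'a and xs ys :: "'a list" and sv :: "'a \<Rightarrow> 'a set"
  assumes "simple_graph V E"
    and "\<forall>x\<in>V. g x \<ge> 0"
    and "v \<in> V"
    and "removal_scheme V E g (xs @ v # ys) sv"
    and "\<forall>u\<in>set xs. u \<in> nbhd V E v \<longrightarrow> v \<in> sv u"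
    and "\<forall>x\<in>set ys. x \<in> nbhd V E v \<longrightarrow> x \<notin> sv v"
  shows "removable (V - {v}) E (\<lambda>u. if u \<in> nbhd V E v then g u - 1 else g u)"
  using removal_scheme_skip_vertex[OF assms(4-6)]
  unfolding removable_def decrement_def by (auto simp: nbhd_def)

end
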